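(* There exists a Guesser that uses $\log^2 n - \log n + 2$ bits of memory and $2\log n$ (long-lasting) random bits whose expected number of correct guesses is at least $\frac14\ln n$ in a game against any static Dealer.
   Context: Card guessing game: a deck consists of $n$ distinct cards labeled $1,\dots,n$ and the game lasts $n$ turns. In each turn the Dealer selects a card from the cards still in the deck and places it face down; the Guesser then names a card of $[n]$; the card is revealed and discarded. A guess is correct if it equals the drawn card; the score is the number of correct guesses. A Guesser with $m$ bits of memory keeps a memory state in $\{0,1\}^m$ between turns and consists of a (possibly randomized) guessing function (memory state $\mapsto$ guess) and a (possibly randomized) state-transition function (memory state and revealed card $\mapsto$ new memory state). Random bits that are used once ("on the fly") are free and not counted; "random bits" of the Guesser refers to long-lasting random bits that she may access repeatedly throughout the game (they are not counted as memory). A static Dealer fixes an arbitrary arrangement of the deck before the game (possibly knowing the Guesser's algorithm, but not her random bits) and draws the cards in that order. $\log$ is base 2, $\ln$ natural. *)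

theory Defs
  imports "HOL-Probability.Probability"
begin

text \<open>
  A memory state of an m-bit Guesser is an element of
  {0,1}^m, encoded as a natural number below 2^m.  The long-lasting random bits
  (r of them) are encoded as a seed below 2^r, drawn uniformly at random once
  before the game.  On-the-fly randomness is modelled by letting the guessing
  function and the state-transition function return probability distributions.
\<close>

definition valid_guesser ::
  "nat \<Rightarrow> nat \<Rightarrow> nat \<Rightarrow> (nat \<Rightarrow> nat \<Rightarrow> nat pmf)
     \<Rightarrow> (nat \<Rightarrow> nat \<Rightarrow> nat \<Rightarrow> nat pmf) \<Rightarrow> nat \<Rightarrow> bool" where
  "valid_guesser n m r guess upd s0 \<longleftrightarrow>
     s0 < 2 ^ m \<and>
     (\<forall>rho < 2 ^ r. \<forall>s < 2 ^ m. set_pmf (guess rho s) \<subseteq> {1..n}) \<and>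
     (\<forall>rho < 2 ^ r. \<forall>s < 2 ^ m. \<forall>c \<in> {1..n}. set_pmf (upd rho s c) \<subseteq> {..<2 ^ m})"

fun play ::
  "(nat \<Rightarrow> nat \<Rightarrow> nat pmf) \<Rightarrow> (nat \<Rightarrow> nat \<Rightarrow> nat \<Rightarrow> nat pmf)
     \<Rightarrow> nat \<Rightarrow> nat \<Rightarrow> nat list \<Rightarrow> nat pmf" where
  "play guess upd rho s [] = return_pmf 0"
| "play guess upd rho s (c # cs) =
     bind_pmf (guess rho s) (\<lambda>x.
     bind_pmf (upd rho s c) (\<lambda>s'.
     bind_pmf (play guess upd rho s' cs) (\<lambda>k.
     return_pmf (k + (if x = c then 1 else 0)))))"

text \<open>Expected score against a static Dealer whose arrangement of the deck is the list
  deck (the first element is drawn first); the seed is uniform over r random bits.\<close>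
definition expected_score ::
  "nat \<Rightarrow> (nat \<Rightarrow> nat \<Rightarrow> nat pmf) \<Rightarrow> (nat \<Rightarrow> nat \<Rightarrow> nat \<Rightarrow> nat pmf)
     \<Rightarrow> nat \<Rightarrow> nat list \<Rightarrow> real" where
  "expected_score r guess upd s0 deck =
     measure_pmf.expectation
       (bind_pmf (pmf_of_set {..<(2::nat) ^ r}) (\<lambda>rho. play guess upd rho s0 deck)) real"

end

theory Submission
  imports Defs "HOL-Analysis.Harmonic_Numbers" "HOL-Computational_Algebra.Factorial_Ring"
begin

text \<open>
  The seed \<open>rho < 4^L\<close> encodes an affine map \<open>x \<mapsto> ((2a + 1) x + b) mod 2^L\<close>, which is
  injective on the cards and whose values at two distinct cards are close to independent.  For every
  level \<open>k < L\<close> the Guesser stores, for the cards already seen whose hash is below \<open>2^k\<close>, their number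
  modulo \<open>max 2 (2^k)\<close> and the sum of their hashes modulo \<open>2^k\<close>; these moduli multiply to
  \<open>2^(L^2 - L + 1)\<close>.  Since she can compute the same two quantities for the whole deck, she notices
  every level at which exactly one unseen card hashes below \<open>2^k\<close>, and then the difference of the sums
  is the hash of that card, which determines it.

  If \<open>R\<close> cards remain, the next card \<open>d\<close> is the only remaining card hashing below \<open>2^k\<close>, for some
  \<open>k < L\<close>, with probability at least \<open>1/(4R)\<close>: sum over the dyadic blocks \<open>[2^(k-1), 2^k)\<close> with
  \<open>2^k \<le> 2^L/R\<close> the probability that the hash of \<open>d\<close> lies in the block, minus the probability that
  another remaining card also hashes below \<open>2^k\<close>.  Summing over the turns gives \<open>harm n / 4 \<ge> ln n / 4\<close>.
\<close>

fun det_score ::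
  "(nat \<Rightarrow> nat \<Rightarrow> nat) \<Rightarrow> (nat \<Rightarrow> nat \<Rightarrow> nat \<Rightarrow> nat) \<Rightarrow> nat \<Rightarrow> nat \<Rightarrow> nat list \<Rightarrow> nat" where
  "det_score G U rho s [] = 0"
| "det_score G U rho s (c # cs) = of_bool (G rho s = c) + det_score G U rho (U rho s c) cs"

lemma play_deterministic:
  "play (\<lambda>rho s. return_pmf (G rho s)) (\<lambda>rho s c. return_pmf (U rho s c)) rho s cs
     = return_pmf (det_score G U rho s cs)"
  by (induction cs arbitrary: s) (simp_all add: bind_return_pmf)

lemma expected_score_deterministic:
  "expected_score r (\<lambda>rho s. return_pmf (G rho s)) (\<lambda>rho s c. return_pmf (U rho s c)) s0 deck
     = (\<Sum>rho<2^r. real (det_score G U rho s0 deck)) / 2^r"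
proof -
  have "bind_pmf (pmf_of_set {..<(2::nat)^r}) (\<lambda>rho. return_pmf (det_score G U rho s0 deck))
          = map_pmf (\<lambda>rho. det_score G U rho s0 deck) (pmf_of_set {..<2^r})"
    by (simp add: map_pmf_def)
  then show ?thesis
    unfolding expected_score_def play_deterministic
    by (simp add: integral_pmf_of_set lessThan_empty_iff)
qed

section \<open>Mixed-radix numerals\<close>

lemma mixed_radix_less:
  fixes f M :: "nat \<Rightarrow> nat"
  assumes "\<And>k. k < L \<Longrightarrow> f k < M k"
  shows "(\<Sum>k<L. f k * prod M {..<k}) < prod M {..<L}"
  using assms
proof (induction L)
  case 0
  then show ?case by simp
next
  case (Suc L)
  have "(\<Sum>k<Suc L. f k * prod M {..<k}) < prod M {..<L} + f L * prod M {..<L}"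
    using Suc by simp
  also have "\<dots> = Suc (f L) * prod M {..<L}"
    by simp
  also have "\<dots> \<le> M L * prod M {..<L}"
    using Suc.prems[of L] by (intro mult_right_mono) auto
  finally show ?case by (simp add: mult.commute)
qed

lemma mixed_radix_digit:
  fixes f M :: "nat \<Rightarrow> nat"
  assumes "\<And>k. k < L \<Longrightarrow> f k < M k" and "j < L"
  shows "(\<Sum>k<L. f k * prod M {..<k}) div prod M {..<j} mod M j = f j"
  using assms
proof (induction L)
  case 0
  then show ?case by simp
next
  case (Suc L)
  let ?S = "\<Sum>k<L. f k * prod M {..<k}"
  have less: "?S < prod M {..<L}"
    using Suc.prems by (intro mixed_radix_less) simp
  have pos: "0 < M k" if "k < Suc L" for k
    using Suc.prems(1)[OF that] by simp
  show ?case
  proof (cases "j = L")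
    case True
    have "prod M {..<L} > 0"
      using pos by (intro prod_pos) simp
    with True less Suc.prems(1)[of L] show ?thesis
      by simp
  next
    case False
    with Suc.prems have "j < L" by simp
    have "prod M {..<Suc j} dvd prod M {..<L}"
      using \<open>j < L\<close> by (intro prod_dvd_prod_subset) auto
    then obtain R where R: "prod M {..<L} = prod M {..<j} * (M j * R)"
      by (auto simp: dvd_def mult.assoc)
    have "prod M {..<j} \<noteq> 0"
      using pos \<open>j < L\<close> by (simp add: prod_pos)
    moreover have "?S + f L * prod M {..<L} = ?S + M j * (f L * R) * prod M {..<j}"
      unfolding R by (simp add: ac_simps)
    ultimately have "(?S + f L * prod M {..<L}) div prod M {..<j} mod M j
        = ?S div prod M {..<j} mod M j"
      by (simp only: div_mult_self1) simp
    then show ?thesis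
      using Suc.IH Suc.prems \<open>j < L\<close> by simp
  qed
qed

section \<open>A nearly pairwise independent hash family\<close>

text \<open>The seed encodes the pair \<open>(rho div 2^L, rho mod 2^L)\<close> and is uniform below \<open>2^L * 2^L\<close>.\<close>

definition hash :: "nat \<Rightarrow> nat \<Rightarrow> nat \<Rightarrow> nat" where
  "hash L rho x = ((2 * (rho div 2^L) + 1) * x + rho mod 2^L) mod 2^L"

lemma inj_on_hash: "inj_on (hash L rho) {1..2^L}"
proof (rule inj_onI)
  fix x y :: nat
  assume x: "x \<in> {1..2^L}" and y: "y \<in> {1..2^L}" and eq: "hash L rho x = hash L rho y"
  let ?a = "2 * (rho div 2^L) + 1" and ?b = "rho mod 2^L"
  have "int (?a * x + ?b) mod 2^L = int (?a * y + ?b) mod 2^L"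
    using eq unfolding hash_def by (metis of_nat_numeral of_nat_power zmod_int)
  then have "(2::int)^L dvd int ?a * (int x - int y)"
    by (simp add: mod_eq_dvd_iff algebra_simps)
  moreover have "coprime ((2::int)^L) (int ?a)"
    by simp
  ultimately have dvd: "(2::int)^L dvd int x - int y"
    using coprime_dvd_mult_right_iff by blast
  have "int x \<le> 2^L" "int y \<le> 2^L" "1 \<le> int x" "1 \<le> int y"
    using x y by simp_all
  then have less: "\<bar>int x - int y\<bar> < 2^L"
    by linarith
  have "int x - int y = 0"
  proof (rule ccontr)
    assume "int x - int y \<noteq> 0"
    then have "\<bar>(2::int)^L\<bar> \<le> \<bar>int x - int y\<bar>"
      using dvd by (rule dvd_imp_le_int)
    with less show False
      by simp
  qed
  then show "x = y"
    by simp
qed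

lemma card_pair_encoded:
  fixes N :: nat
  assumes "0 < N"
  shows "card {rho. rho < N * N \<and> P (rho div N) (rho mod N)} = (\<Sum>a<N. card {b. b < N \<and> P a b})"
proof -
  have "bij_betw (\<lambda>rho. (rho div N, rho mod N))
      {rho. rho < N * N \<and> P (rho div N) (rho mod N)} (SIGMA a:{..<N}. {b. b < N \<and> P a b})"
  proof (rule bij_betw_byWitness[where f' = "\<lambda>(a, b). a * N + b"])
    show "(\<lambda>(a, b). a * N + b) ` (SIGMA a:{..<N}. {b. b < N \<and> P a b})
        \<subseteq> {rho. rho < N * N \<and> P (rho div N) (rho mod N)}"
    proof clarsimp
      fix a b assume "a < N" "b < N"
      then have "a * N + b < Suc a * N"
        by simp
      also have "\<dots> \<le> N * N"
        using \<open>a < N\<close> by (intro mult_right_mono) auto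
      finally show "a * N + b < N * N" .
    qed
    show "\<forall>rho\<in>{rho. rho < N * N \<and> P (rho div N) (rho mod N)}.
        (\<lambda>(a, b). a * N + b) (rho div N, rho mod N) = rho"
      by simp
    show "\<forall>p\<in>SIGMA a:{..<N}. {b. b < N \<and> P a b}. (\<lambda>rho. (rho div N, rho mod N)) ((\<lambda>(a, b). a * N + b) p) = p"
      by auto
    show "(\<lambda>rho. (rho div N, rho mod N)) ` {rho. rho < N * N \<and> P (rho div N) (rho mod N)}
        \<subseteq> (SIGMA a:{..<N}. {b. b < N \<and> P a b})"
      using assms by (auto intro: less_mult_imp_div_less)
  qed
  then show ?thesis
    by (simp add: bij_betw_same_card)
qed

lemma card_shift_mod_eq:
  fixes N :: nat
  assumes "u < N"
  shows "card {b. b < N \<and> (a + b) mod N = u} = 1"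
proof -
  define b0 where "b0 = (u + N - a mod N) mod N"
  have "(a + b0) mod N = (a mod N + (u + N - a mod N)) mod N"
    unfolding b0_def by (simp add: mod_simps)
  also have "a mod N + (u + N - a mod N) = u + N"
    using assms mod_le_divisor[of N a] by linarith
  also have "(u + N) mod N = u"
    using assms by simp
  finally have b0: "(a + b0) mod N = u" .
  have "b = b0" if "b < N" "(a + b) mod N = u" for b
  proof -
    have "(a + b) mod N = (a + b0) mod N"
      using that b0 by simp
    then have "b mod N = b0 mod N"
      by (simp add: mod_eq_iff_dvd_symdiff_nat)
    then show "b = b0"
      using \<open>b < N\<close> by (simp add: b0_def)
  qed
  with assms b0 have "{b. b < N \<and> (a + b) mod N = u} = {b0}"
    by (auto simp: b0_def)
  then show ?thesis
    by simp
qed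

lemma card_hash_eq:
  assumes "u < 2^L"
  shows "card {rho. rho < 2^L * 2^L \<and> hash L rho x = u} = 2^L"
proof -
  have "card {rho. rho < 2^L * 2^L \<and> hash L rho x = u}
      = (\<Sum>a<(2::nat)^L. card {b. b < 2^L \<and> ((2 * a + 1) * x + b) mod 2^L = u})"
    unfolding hash_def by (rule card_pair_encoded) simp
  also have "\<dots> = 2^L"
    using card_shift_mod_eq[OF assms] by simp
  finally show ?thesis .
qed

lemma odd_multiple_mod_pow2:
  fixes g q u :: int
  assumes "g = 2^e * q" "odd q" "e < L"
  shows "(u + (2 * int a + 1) * g) mod 2^L mod 2^Suc e = (u + 2^e) mod 2^Suc e"
proof -
  have "odd ((2 * int a + 1) * q)"
    using assms(2) by simp
  then obtain m where m: "(2 * int a + 1) * q = 2 * m + 1"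
    by (rule oddE)
  have "(2 * int a + 1) * g = 2^e * ((2 * int a + 1) * q)"
    using assms(1) by (simp add: ac_simps)
  also have "\<dots> = 2^e + m * 2^Suc e"
    unfolding m by (simp add: algebra_simps)
  finally have eq: "u + (2 * int a + 1) * g = (u + 2^e) + m * 2^Suc e"
    by simp
  have "(2::int)^Suc e dvd 2^L"
    using assms(3) by (intro le_imp_power_dvd) simp
  then have "(u + (2 * int a + 1) * g) mod 2^L mod 2^Suc e = (u + (2 * int a + 1) * g) mod 2^Suc e"
    by (rule mod_mod_cancel)
  then show ?thesis
    unfolding eq by simp
qed

lemma odd_multiple_mod_pow2_cancel:
  fixes g q u :: int
  assumes "g = 2^e * q" "odd q" "e < L"
    and "(u + (2 * int a + 1) * g) mod 2^L = (u + (2 * int b + 1) * g) mod 2^L"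
  shows "a mod 2^(L - Suc e) = b mod 2^(L - Suc e)"
proof -
  have "(2::int)^L = 2^Suc e * 2^(L - Suc e)"
    using assms(3) by (simp only: power_add[symmetric]) simp
  moreover have "(u + (2 * int a + 1) * g) - (u + (2 * int b + 1) * g)
      = 2^Suc e * ((int a - int b) * q)"
    using assms(1) by (simp add: algebra_simps)
  ultimately have "2^Suc e * 2^(L - Suc e) dvd (2::int)^Suc e * ((int a - int b) * q)"
    using assms(4) by (metis mod_eq_dvd_iff)
  then have "(2::int)^(L - Suc e) dvd (int a - int b) * q"
    by simp
  moreover have "coprime ((2::int)^(L - Suc e)) q"
    using assms(2) by simp
  ultimately have "(2::int)^(L - Suc e) dvd int a - int b"
    using coprime_dvd_mult_left_iff by blast
  then have "int a mod 2^(L - Suc e) = int b mod 2^(L - Suc e)"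
    by (simp add: mod_eq_dvd_iff)
  then show ?thesis
    by (metis of_nat_eq_iff of_nat_numeral of_nat_power zmod_int)
qed

lemma shifted_odd_multiple_not_below:
  fixes g q u :: int
  assumes "g = 2^e * q" "odd q" "e < L" "k \<le> e" "0 \<le> u" "u < 2^k"
  shows "\<not> (u + (2 * int a + 1) * g) mod 2^L < 2^k"
proof
  let ?v = "(u + (2 * int a + 1) * g) mod 2^L"
  assume "?v < 2^k"
  have "(2::int)^k \<le> 2^e"
    using assms(4) by simp
  with \<open>?v < 2^k\<close> assms(6) have "?v < 2^e" "u < 2^e"
    by linarith+
  moreover have "(2::int)^e < 2^Suc e" "0 \<le> ?v"
    by simp_all
  ultimately have "?v = ?v mod 2^Suc e"
    by (intro mod_pos_pos_trivial[symmetric]) linarith+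
  also have "\<dots> = (u + 2^e) mod 2^Suc e"
    by (rule odd_multiple_mod_pow2[OF assms(1-3)])
  also have "\<dots> = u + 2^e"
    using assms(5) \<open>u < 2^e\<close> by (intro mod_pos_pos_trivial) auto
  finally show False
    using \<open>?v < 2^e\<close> assms(5) by simp
qed

text \<open>Every value \<open>(u + (2a + 1) g) mod 2^L\<close> is congruent to \<open>u + 2^e\<close> modulo \<open>2^(e+1)\<close> and
  determines \<open>a\<close> modulo \<open>2^(L-e-1)\<close>; so \<open>a\<close> is determined by the quotient of that value by \<open>2^(e+1)\<close>
  together with \<open>a div 2^(L-e-1)\<close>.\<close>

lemma card_shifted_odd_multiples_below_pow2:
  fixes g q u :: int
  assumes g: "g = 2^e * q" "odd q" and "e < k" "k \<le> L"
  shows "card {a. a < 2^L \<and> (u + (2 * int a + 1) * g) mod 2^L < 2^k} \<le> 2^k"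
proof -
  define v where "v a = (u + (2 * int a + 1) * g) mod 2^L" for a
  define V where "V = {a. a < 2^L \<and> v a < 2^k}"
  define \<phi> where "\<phi> a = (nat (v a div 2^Suc e), a div 2^(L - Suc e))" for a
  have "e < L"
    using assms(3,4) by simp
  have v_nonneg: "0 \<le> v a" for a
    by (simp add: v_def)
  have pow2_split: "(2::int)^k = 2^(k - Suc e) * 2^Suc e" "(2::nat)^k = 2^(k - Suc e) * 2^Suc e"
      "(2::nat)^L = 2^Suc e * 2^(L - Suc e)"
    using assms(3,4) by (simp_all only: power_add[symmetric]) simp_all
  have "\<phi> ` V \<subseteq> {..<2^(k - Suc e)} \<times> {..<2^Suc e}"
  proof (rule image_subsetI)
    fix a assume "a \<in> V"
    then have "v a < 2^(k - Suc e) * 2^Suc e" "a < 2^Suc e * 2^(L - Suc e)"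
      using pow2_split by (simp_all add: V_def)
    then have "v a div 2^Suc e < 2^(k - Suc e)"
      by (smt (verit) minus_div_mult_eq_mod mult_right_less_imp_less pos_mod_sign zero_less_power)
    moreover have "a div 2^(L - Suc e) < 2^Suc e"
      using \<open>a < 2^Suc e * 2^(L - Suc e)\<close> by (rule less_mult_imp_div_less)
    ultimately show "\<phi> a \<in> {..<2^(k - Suc e)} \<times> {..<2^Suc e}"
      by (simp add: \<phi>_def nat_less_iff)
  qed
  moreover have "inj_on \<phi> V"
  proof (rule inj_onI)
    fix a b assume "a \<in> V" "b \<in> V" "\<phi> a = \<phi> b"
    then have "v a div 2^Suc e = v b div 2^Suc e" "a div 2^(L - Suc e) = b div 2^(L - Suc e)"
      using v_nonneg by (simp_all add: \<phi>_def nat_eq_iff2 pos_imp_zdiv_nonneg_iff)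
    moreover have "v a mod 2^Suc e = v b mod 2^Suc e"
      unfolding v_def using odd_multiple_mod_pow2[OF g \<open>e < L\<close>] by simp
    ultimately have "v a = v b"
      by (metis div_mod_decomp_int)
    then have "a mod 2^(L - Suc e) = b mod 2^(L - Suc e)"
      unfolding v_def by (rule odd_multiple_mod_pow2_cancel[OF g \<open>e < L\<close>])
    with \<open>a div 2^(L - Suc e) = b div 2^(L - Suc e)\<close> show "a = b"
      by (metis div_mod_decomp)
  qed
  ultimately have "card V \<le> card ({..<(2::nat)^(k - Suc e)} \<times> {..<(2::nat)^Suc e})"
    by (intro card_inj_on_le) auto
  also have "\<dots> = 2^k"
    by (simp only: card_cartesian_product card_lessThan pow2_split(2))
  finally show ?thesis
    by (simp add: V_def v_def)
qed

text \<open>With \<open>g = c - d\<close> this bounds the number of multipliers for which \<open>c\<close> hashes below \<open>2^k\<close>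
  once the hash of \<open>d\<close> is fixed.\<close>

lemma card_shifted_odd_multiples_below:
  fixes g u :: int
  assumes "g \<noteq> 0" "\<bar>g\<bar> < 2^L" "k \<le> L" "0 \<le> u" "u < 2^k"
  shows "card {a. a < 2^L \<and> (u + (2 * int a + 1) * g) mod 2^L < 2^k} \<le> 2^k"
proof -
  define e where "e = multiplicity 2 g"
  obtain q where g: "g = 2^e * q" and "odd q"
    using multiplicity_decompose'[OF assms(1), of 2] unfolding e_def by auto
  then have "1 \<le> \<bar>q\<bar>"
    by (auto simp: int_one_le_iff_zero_less)
  then have "(2::int)^e \<le> \<bar>g\<bar>"
    using mult_left_mono[of 1 "\<bar>q\<bar>" "2^e"] g by (simp add: abs_mult)
  with assms(2) have "e < L"
    by (metis order_le_less_trans power_strict_increasing_iff one_less_numeral_iff semiring_norm(76))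
  show ?thesis
  proof (cases "k \<le> e")
    case True
    then show ?thesis
      using shifted_odd_multiple_not_below[OF g \<open>odd q\<close> \<open>e < L\<close> True assms(4,5)] by simp
  next
    case False
    then show ?thesis
      using card_shifted_odd_multiples_below_pow2[OF g \<open>odd q\<close> _ assms(3)] by simp
  qed
qed

lemma card_hash_eq_hash_less:
  assumes "u < 2^k" "k \<le> L" "c \<noteq> d" "c \<in> {1..2^L}" "d \<in> {1..2^L}"
  shows "card {rho. rho < 2^L * 2^L \<and> hash L rho d = u \<and> hash L rho c < 2^k} \<le> 2^k"
proof -
  define good where "good a \<longleftrightarrow> (int u + (2 * int a + 1) * (int c - int d)) mod 2^L < 2^k" for a
  have "u < 2^L"
    using assms(1,2) by (meson order_less_le_trans one_le_numeral power_increasing)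
  have fibre: "card {b. b < 2^L \<and> ((2 * a + 1) * d + b) mod 2^L = u \<and> ((2 * a + 1) * c + b) mod 2^L < 2^k}
      \<le> of_bool (good a)" (is "card ?B \<le> _") for a
  proof -
    have "card ?B \<le> card {b. b < 2^L \<and> ((2 * a + 1) * d + b) mod 2^L = u}"
      by (rule card_mono) auto
    then have "card ?B \<le> 1"
      using card_shift_mod_eq[OF \<open>u < 2^L\<close>] by simp
    moreover have "good a" if "b \<in> ?B" for b
    proof -
      have "int (((2 * a + 1) * c + b) mod 2^L) = int ((2 * a + 1) * c + b) mod 2^L"
        by (simp only: zmod_int of_nat_power of_nat_numeral)
      also have "int ((2 * a + 1) * c + b) = int ((2 * a + 1) * d + b) + (2 * int a + 1) * (int c - int d)"
        by (simp add: algebra_simps)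
      also have "(int ((2 * a + 1) * d + b) + (2 * int a + 1) * (int c - int d)) mod 2^L
          = (int (((2 * a + 1) * d + b) mod 2^L) + (2 * int a + 1) * (int c - int d)) mod 2^L"
        by (simp only: zmod_int of_nat_power of_nat_numeral mod_add_left_eq)
      finally have eq: "int (((2 * a + 1) * c + b) mod 2^L)
          = (int (((2 * a + 1) * d + b) mod 2^L) + (2 * int a + 1) * (int c - int d)) mod 2^L" .
      from that have "((2 * a + 1) * d + b) mod 2^L = u" "((2 * a + 1) * c + b) mod 2^L < 2^k"
        by simp_all
      with eq have "(int u + (2 * int a + 1) * (int c - int d)) mod 2^L < int (2^k)"
        by (metis of_nat_less_iff)
      then show ?thesis
        by (simp add: good_def)
    qed
    ultimately show ?thesis
      by (cases "?B = {}") auto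
  qed
  have "card {rho. rho < 2^L * 2^L \<and> hash L rho d = u \<and> hash L rho c < 2^k}
      = (\<Sum>a<(2::nat)^L. card {b. b < 2^L \<and> ((2 * a + 1) * d + b) mod 2^L = u
                                   \<and> ((2 * a + 1) * c + b) mod 2^L < 2^k})"
    unfolding hash_def by (rule card_pair_encoded) simp
  also have "\<dots> \<le> (\<Sum>a<(2::nat)^L. of_bool (good a))"
    by (intro sum_mono fibre)
  also have "\<dots> = card {a. a < 2^L \<and> good a}"
    by (simp add: sum_of_bool_eq lessThan_def Collect_conj_eq)
  also have "\<dots> \<le> 2^k"
    unfolding good_def
  proof (rule card_shifted_odd_multiples_below)
    have "int c \<le> 2^L" "int d \<le> 2^L" "1 \<le> int c" "1 \<le> int d"
      using assms(4,5) by simp_all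
    then show "\<bar>int c - int d\<bar> < 2^L"
      by linarith
  qed (use assms in auto)
  finally show ?thesis .
qed

section \<open>Isolating the next card\<close>

definition hash_below :: "nat \<Rightarrow> nat \<Rightarrow> nat \<Rightarrow> nat set \<Rightarrow> nat set" where
  "hash_below L rho k X = {x \<in> X. hash L rho x < 2^k}"

definition dyadic_block :: "nat \<Rightarrow> nat set" where
  "dyadic_block k = {2^k div 2..<2^k}"

lemma dyadic_block_less: "u \<in> dyadic_block k \<Longrightarrow> u < 2^k"
  by (simp add: dyadic_block_def)

lemma finite_dyadic_block [simp]: "finite (dyadic_block k)"
  by (simp add: dyadic_block_def)

lemma dyadic_block_0: "dyadic_block 0 = {0}"
  by (auto simp: dyadic_block_def)

lemma card_dyadic_block: "1 \<le> k \<Longrightarrow> card (dyadic_block k) = 2^(k - 1)"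
  by (cases k) (simp_all add: dyadic_block_def)

lemma dyadic_blocks_disjoint:
  assumes "i < j"
  shows "dyadic_block i \<inter> dyadic_block j = {}"
proof -
  have "(2::nat)^i \<le> 2^(j - 1)"
    using assms by (intro power_increasing) auto
  also have "\<dots> = 2^j div 2"
    using assms by (cases j) auto
  finally show ?thesis
    by (auto simp: dyadic_block_def)
qed

lemma card_preimage_sum_fibres:
  assumes "finite A" "finite B"
  shows "card {x \<in> A. f x \<in> B} = (\<Sum>u\<in>B. card {x \<in> A. f x = u})"
proof -
  have "{x \<in> A. f x \<in> B} = (\<Union>u\<in>B. {x \<in> A. f x = u})"
    by auto
  also have "card \<dots> = (\<Sum>u\<in>B. card {x \<in> A. f x = u})"
    by (rule card_UN_disjoint) (use assms in auto)
  finally show ?thesis .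
qed

text \<open>Requiring the hash of \<open>d\<close> to lie in the \<open>k\<close>-th dyadic block makes these sets disjoint in \<open>k\<close>.\<close>

definition block_isolating :: "nat \<Rightarrow> nat set \<Rightarrow> nat \<Rightarrow> nat \<Rightarrow> nat set" where
  "block_isolating L R d k =
     {rho. rho < 2^L * 2^L \<and> hash L rho d \<in> dyadic_block k \<and> hash_below L rho k R = {d}}"

lemma block_isolating_disjoint:
  assumes "i \<noteq> j"
  shows "block_isolating L R d i \<inter> block_isolating L R d j = {}"
  using assms dyadic_blocks_disjoint[of i j] dyadic_blocks_disjoint[of j i]
  by (cases "i < j") (auto simp: block_isolating_def)

text \<open>Level 0 is treated exactly: by injectivity no other card can also hash to 0.\<close>

lemma card_block_isolating_0:
  assumes "R \<subseteq> {1..2^L}" "d \<in> R"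
  shows "card (block_isolating L R d 0) = 2^L"
proof -
  have "x = d" if "x \<in> R" "hash L rho x = 0" "hash L rho d = 0" for x rho
    using that assms by (metis inj_onD inj_on_hash subsetD)
  then have "hash_below L rho 0 R = {d}" if "hash L rho d = 0" for rho
    using that assms(2) by (auto simp: hash_below_def)
  then have "block_isolating L R d 0 = {rho. rho < 2^L * 2^L \<and> hash L rho d = 0}"
    by (auto simp: block_isolating_def dyadic_block_0)
  then show ?thesis
    by (simp add: card_hash_eq)
qed

lemma card_hash_in_dyadic_block:
  assumes "1 \<le> k" "k \<le> L"
  shows "card {rho. rho < 2^L * 2^L \<and> hash L rho d \<in> dyadic_block k} = 2^(k - 1) * 2^L"
proof -
  have "u < 2^L" if "u \<in> dyadic_block k" for u
    using dyadic_block_less[OF that] assms(2)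
    by (meson order_less_le_trans one_le_numeral power_increasing)
  then have "(\<Sum>u\<in>dyadic_block k. card {rho \<in> {..<2^L * 2^L}. hash L rho d = u}) = 2^(k - 1) * 2^L"
    using card_dyadic_block[OF assms(1)] by (simp add: card_hash_eq)
  then show ?thesis
    by (simp add: card_preimage_sum_fibres flip: lessThan_iff)
qed

lemma card_hash_in_dyadic_block_collision:
  assumes "k \<le> L" "c \<noteq> d" "c \<in> {1..2^L}" "d \<in> {1..2^L}"
  shows "card {rho. rho < 2^L * 2^L \<and> hash L rho d \<in> dyadic_block k \<and> hash L rho c < 2^k}
           \<le> card (dyadic_block k) * 2^k"
proof -
  let ?A = "{rho. rho < 2^L * 2^L \<and> hash L rho c < 2^k}"
  have "card {rho. rho < 2^L * 2^L \<and> hash L rho d \<in> dyadic_block k \<and> hash L rho c < 2^k}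
      = card {rho \<in> ?A. hash L rho d \<in> dyadic_block k}"
    by (rule arg_cong[where f = card]) auto
  also have "\<dots> = (\<Sum>u\<in>dyadic_block k. card {rho \<in> ?A. hash L rho d = u})"
    by (rule card_preimage_sum_fibres) simp_all
  also have "\<dots> \<le> (\<Sum>u\<in>dyadic_block k. 2^k)"
  proof (rule sum_mono)
    fix u assume "u \<in> dyadic_block k"
    then have "card {rho. rho < 2^L * 2^L \<and> hash L rho d = u \<and> hash L rho c < 2^k} \<le> 2^k"
      by (rule card_hash_eq_hash_less[OF dyadic_block_less assms])
    moreover have "{rho \<in> ?A. hash L rho d = u}
        = {rho. rho < 2^L * 2^L \<and> hash L rho d = u \<and> hash L rho c < 2^k}"
      by auto
    ultimately show "card {rho \<in> ?A. hash L rho d = u} \<le> 2^k"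
      by simp
  qed
  finally show ?thesis
    by simp
qed

lemma card_block_isolating:
  assumes "1 \<le> k" "k \<le> L" "R \<subseteq> {1..2^L}" "d \<in> R"
  shows "2^(k - 1) * 2^L \<le> card (block_isolating L R d k) + (card R - 1) * (2^(k - 1) * 2^k)"
proof -
  define F where "F c = {rho. rho < 2^L * 2^L \<and> hash L rho d \<in> dyadic_block k \<and> hash L rho c < 2^k}" for c
  have "finite R"
    using assms(3) finite_subset by blast
  have "2^(k - 1) * 2^L = card {rho. rho < 2^L * 2^L \<and> hash L rho d \<in> dyadic_block k}"
    using card_hash_in_dyadic_block[OF assms(1,2)] ..
  also have "\<dots> \<le> card (block_isolating L R d k \<union> (\<Union>c\<in>R - {d}. F c))"
    using \<open>finite R\<close> assms(4) dyadic_block_less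
    by (intro card_mono) (auto simp: F_def block_isolating_def hash_below_def)
  also have "\<dots> \<le> card (block_isolating L R d k) + (\<Sum>c\<in>R - {d}. card (F c))"
    using card_Un_le card_UN_le[of "R - {d}" F] \<open>finite R\<close> by (meson add_left_mono finite_Diff order_trans)
  also have "(\<Sum>c\<in>R - {d}. card (F c)) \<le> (\<Sum>c\<in>R - {d}. 2^(k - 1) * 2^k)"
  proof (rule sum_mono)
    fix c assume "c \<in> R - {d}"
    with assms(3,4) have "c \<noteq> d" "c \<in> {1..2^L}" "d \<in> {1..2^L}"
      by auto
    then show "card (F c) \<le> 2^(k - 1) * 2^k"
      unfolding F_def card_dyadic_block[OF assms(1), symmetric]
      by (rule card_hash_in_dyadic_block_collision[OF assms(2)])
  qed
  also have "\<dots> = (card R - 1) * (2^(k - 1) * 2^k)"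
    using \<open>finite R\<close> assms(4) by (simp add: card_Diff_singleton)
  finally show ?thesis
    by simp
qed

lemma sum_pow2_pred: "(\<Sum>k=1..K. 2^(k - 1)) + 1 = (2::nat)^K"
  by (induction K) simp_all

lemma sum_pow2_products: "3 * (\<Sum>k=1..K. 2^(k - 1) * 2^k) + 2 = 2 * (4::nat)^K"
proof (induction K)
  case 0
  then show ?case by simp
next
  case (Suc K)
  have "(2::nat)^K * 2^Suc K = 2 * 4^K"
    by (simp add: power_mult_distrib[symmetric])
  with Suc show ?case
    by simp
qed

lemma card_isolating_seeds_ge_blocks:
  assumes "K < L" "R \<subseteq> {1..2^L}" "d \<in> R"
  shows "2^K * 2^L \<le> card {rho. rho < 2^L * 2^L \<and> (\<exists>k<L. hash_below L rho k R = {d})}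
                      + (card R - 1) * (\<Sum>k=1..K. 2^(k - 1) * 2^k)"
proof -
  let ?E = "block_isolating L R d"
  have "(\<Sum>k\<in>{0..K}. card (?E k)) = card (\<Union>k\<in>{0..K}. ?E k)"
  proof (rule card_UN_disjoint[symmetric])
    show "\<forall>i\<in>{0..K}. \<forall>j\<in>{0..K}. i \<noteq> j \<longrightarrow> ?E i \<inter> ?E j = {}"
      using block_isolating_disjoint by blast
  qed (auto simp: block_isolating_def)
  also have "\<dots> \<le> card {rho. rho < 2^L * 2^L \<and> (\<exists>k<L. hash_below L rho k R = {d})}"
    using assms(1) by (intro card_mono) (auto simp: block_isolating_def, meson le_less_trans)
  finally have union: "card (?E 0) + (\<Sum>k=1..K. card (?E k))
      \<le> card {rho. rho < 2^L * 2^L \<and> (\<exists>k<L. hash_below L rho k R = {d})}"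
    by (simp add: sum.atLeast_Suc_atMost)
  have "(\<Sum>k=1..K. 2^(k - 1) * 2^L)
      \<le> (\<Sum>k=1..K. card (?E k) + (card R - 1) * (2^(k - 1) * 2^k))"
    using assms by (intro sum_mono card_block_isolating) auto
  then have "(\<Sum>k=1..K. 2^(k - 1)) * 2^L
      \<le> (\<Sum>k=1..K. card (?E k)) + (card R - 1) * (\<Sum>k=1..K. 2^(k - 1) * 2^k)"
    by (simp add: sum.distrib sum_distrib_left sum_distrib_right)
  moreover have "2^K * 2^L = 2^L + (\<Sum>k=1..K. 2^(k - 1)) * (2::nat)^L"
    by (subst sum_pow2_pred[of K, symmetric]) (simp add: algebra_simps)
  ultimately show ?thesis
    using union card_block_isolating_0[OF assms(2,3)] by linarith
qed

lemma exists_pow2_scale: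
  assumes "1 \<le> L" "1 \<le> R" "R \<le> (2::nat)^L"
  shows "\<exists>K<L. R * 2^K \<le> 2^L \<and> 2^L \<le> 2 * R * 2^K"
  using assms
proof (induction L rule: dec_induct)
  case base
  then show ?case by (intro exI[of _ 0]) auto
next
  case (step L)
  show ?case
  proof (cases "R \<le> 2^L")
    case True
    with step obtain K where "K < L" "R * 2^K \<le> 2^L" "2^L \<le> 2 * R * 2^K"
      by auto
    then show ?thesis
      by (intro exI[of _ "Suc K"]) auto
  next
    case False
    with step.prems show ?thesis
      by (intro exI[of _ 0]) auto
  qed
qed

lemma isolation_quadratic_bound:
  fixes N R x S :: real
  assumes "1 \<le> R" "1 \<le> x" "R * x \<le> N" "N \<le> 2 * R * x" "3 * S + 2 = 2 * x^2"
  shows "N^2 / (4 * R) \<le> N * x - (R - 1) * S"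
proof -
  have "1 \<le> x^2"
    using assms(2) by simp
  then have "0 \<le> S"
    using assms(5) by linarith
  then have "(R - 1) * S \<le> R * S"
    by (simp add: mult_right_mono)
  also have "\<dots> \<le> R * (2 * x^2) / 3"
    using assms(1,5) by simp
  finally have "(R - 1) * S \<le> R * (2 * x^2) / 3" .
  have "N^2 \<le> (N * x - R * (2 * x^2) / 3) * (4 * R)"
  proof -
    have "(N * x - R * (2 * x^2) / 3) * (4 * R) - N^2 = (N^2 + 8 * ((R * x - N / 2) * (N - R * x))) / 3"
      by (simp add: field_simps power2_eq_square)
    moreover have "0 \<le> (R * x - N / 2) * (N - R * x)"
      using assms(3,4) by (intro mult_nonneg_nonneg) auto
    ultimately show ?thesis
      by (smt (verit) zero_le_power2 divide_nonneg_pos)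
  qed
  then have "N^2 / (4 * R) \<le> N * x - R * (2 * x^2) / 3"
    using assms(1) by (simp add: divide_le_eq)
  with \<open>(R - 1) * S \<le> R * (2 * x^2) / 3\<close> show ?thesis
    by linarith
qed

lemma card_isolating_seeds:
  assumes "1 \<le> L" "R \<subseteq> {1..2^L}" "d \<in> R"
  shows "real (2^L * 2^L) / (4 * real (card R))
           \<le> card {rho. rho < 2^L * 2^L \<and> (\<exists>k<L. hash_below L rho k R = {d})}"
proof -
  define G where "G = card {rho. rho < 2^L * 2^L \<and> (\<exists>k<L. hash_below L rho k R = {d})}"
  have "finite R"
    using assms(2) finite_subset by blast
  then have "1 \<le> card R"
    using assms(3) by (metis One_nat_def Suc_leI card_gt_0_iff empty_iff)
  moreover have "card R \<le> 2^L"
    using card_mono[OF _ assms(2)] by simp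
  ultimately obtain K where "K < L" and K: "card R * 2^K \<le> 2^L" "2^L \<le> 2 * card R * 2^K"
    using exists_pow2_scale[OF assms(1)] by blast
  define S where "S = (\<Sum>k=1..K. 2^(k - 1) * 2^k :: nat)"
  have "2^K * 2^L \<le> G + (card R - 1) * S"
    unfolding G_def S_def using \<open>K < L\<close> assms(2,3) by (rule card_isolating_seeds_ge_blocks)
  then have "real (2^K * 2^L) \<le> real (G + (card R - 1) * S)"
    by (simp only: of_nat_le_iff)
  also have "\<dots> = G + (real (card R) - 1) * S"
    using \<open>1 \<le> card R\<close> by (simp add: of_nat_diff)
  finally have "real (2^L) * 2^K - (real (card R) - 1) * S \<le> G"
    by (simp add: mult.commute)
  moreover have "(real (2^L))^2 / (4 * real (card R)) \<le> real (2^L) * 2^K - (real (card R) - 1) * S"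
  proof (rule isolation_quadratic_bound)
    have "real (card R * 2^K) \<le> real (2^L)" "real (2^L) \<le> real (2 * card R * 2^K)"
      using K by (simp_all only: of_nat_le_iff)
    then show "real (card R) * 2^K \<le> real (2^L)" "real (2^L) \<le> 2 * real (card R) * 2^K"
      by simp_all
    have "3 * S + 2 = 2 * (2^K)^2"
      unfolding S_def sum_pow2_products by (simp add: power2_eq_square flip: power_mult_distrib)
    then have "real (3 * S + 2) = real (2 * (2^K)^2)"
      by (simp only:)
    then show "3 * real S + 2 = 2 * (2^K)^2"
      by simp
  qed (use \<open>1 \<le> card R\<close> in simp_all)
  ultimately show ?thesis
    by (simp add: G_def power2_eq_square)
qed

section \<open>The Guesser\<close>

text \<open>At most \<open>2^k\<close> cards hash below \<open>2^k\<close>, so counting them modulo \<open>max 2 (2^k)\<close> still tells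
  whether exactly one of them is unseen (see \<open>counter_test_iff\<close>).\<close>

definition counter_mod :: "nat \<Rightarrow> nat" where
  "counter_mod k = max 2 (2^k)"

definition level_mod :: "nat \<Rightarrow> nat" where
  "level_mod k = counter_mod k * 2^k"

definition level_summary :: "nat \<Rightarrow> nat \<Rightarrow> nat \<Rightarrow> nat set \<Rightarrow> nat" where
  "level_summary L rho k X =
     (card (hash_below L rho k X) + counter_mod k * (\<Sum>x\<in>hash_below L rho k X. hash L rho x)) mod level_mod k"

definition encode :: "nat \<Rightarrow> nat \<Rightarrow> nat set \<Rightarrow> nat" where
  "encode L rho X = (\<Sum>k<L. level_summary L rho k X * prod level_mod {..<k})"

definition level_digit :: "nat \<Rightarrow> nat \<Rightarrow> nat" where
  "level_digit s k = s div prod level_mod {..<k} mod level_mod k"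

definition update :: "nat \<Rightarrow> nat \<Rightarrow> nat \<Rightarrow> nat \<Rightarrow> nat" where
  "update L rho s c =
     (\<Sum>k<L. (level_digit s k + (if hash L rho c < 2^k then 1 + counter_mod k * hash L rho c else 0))
               mod level_mod k * prod level_mod {..<k})"

definition single_unseen :: "nat \<Rightarrow> nat \<Rightarrow> nat \<Rightarrow> nat \<Rightarrow> nat \<Rightarrow> bool" where
  "single_unseen n L rho s k \<longleftrightarrow>
     1 \<le> card (hash_below L rho k {1..n}) \<and>
     level_digit s k mod counter_mod k = card (hash_below L rho k {1..n}) - 1"

definition unseen_candidate :: "nat \<Rightarrow> nat \<Rightarrow> nat \<Rightarrow> nat \<Rightarrow> nat \<Rightarrow> nat \<Rightarrow> bool" where
  "unseen_candidate n L rho s k y \<longleftrightarrow>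
     y \<in> hash_below L rho k {1..n} \<and>
     (level_digit s k div counter_mod k + hash L rho y) mod 2^k
       = (\<Sum>x\<in>hash_below L rho k {1..n}. hash L rho x) mod 2^k"

text \<open>The least level is taken over all \<open>k\<close>: if no level below \<open>L\<close> passes the test, the guess
  is arbitrary, but it is still a card.\<close>

definition guess_card :: "nat \<Rightarrow> nat \<Rightarrow> nat \<Rightarrow> nat \<Rightarrow> nat" where
  "guess_card n L rho s =
     (let k = LEAST k. single_unseen n L rho s k in
      if \<exists>y. unseen_candidate n L rho s k y then LEAST y. unseen_candidate n L rho s k y else 1)"

lemma counter_mod_ge: "2 \<le> counter_mod k" "2^k \<le> counter_mod k"
  by (simp_all add: counter_mod_def)

lemma level_mod_pos: "0 < level_mod k"
  using counter_mod_ge(1)[of k] by (simp add: level_mod_def)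

lemma prod_level_mod: "1 \<le> L \<Longrightarrow> prod level_mod {..<L} = 2^(L * L - L + 1)"
proof (induction L rule: dec_induct)
  case base
  then show ?case by (simp add: level_mod_def counter_mod_def)
next
  case (step m)
  then have "(2::nat)^1 \<le> 2^m"
    by (intro power_increasing) simp_all
  then have "level_mod m = 2^(m + m)"
    by (simp add: level_mod_def counter_mod_def power_add)
  moreover have "m * m - m + 1 + (m + m) = Suc m * Suc m - Suc m + 1"
    by (simp add: le_square)
  ultimately show ?case
    using step.IH by (simp flip: power_add)
qed

lemma prod_level_mod_le: "prod level_mod {..<L} \<le> 2^(L^2 - L + 2)"
proof (cases "L = 0")
  case False
  then have "prod level_mod {..<L} = 2^(L * L - L + 1)"
    by (simp add: prod_level_mod)
  also have "\<dots> \<le> 2^(L^2 - L + 2)"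
    by (intro power_increasing) (auto simp: power2_eq_square)
  finally show ?thesis .
qed simp

lemma level_summary_less: "level_summary L rho k X < level_mod k"
  by (simp add: level_summary_def level_mod_pos)

lemma level_digit_encode: "k < L \<Longrightarrow> level_digit (encode L rho X) k = level_summary L rho k X"
  unfolding level_digit_def encode_def by (rule mixed_radix_digit) (simp_all add: level_summary_less)

lemma encode_empty: "encode L rho {} = 0"
  by (simp add: encode_def level_summary_def hash_below_def)

lemma update_less: "update L rho s c < prod level_mod {..<L}"
  unfolding update_def by (rule mixed_radix_less) (simp add: level_mod_pos)

lemma update_encode:
  assumes "finite X" "c \<notin> X"
  shows "update L rho (encode L rho X) c = encode L rho (insert c X)"
  unfolding update_def encode_def[of L rho "insert c X"]
proof (rule sum.cong[OF refl])
  fix k assume "k \<in> {..<L}"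
  have "hash_below L rho k (insert c X)
      = (if hash L rho c < 2^k then insert c (hash_below L rho k X) else hash_below L rho k X)"
    by (auto simp: hash_below_def)
  moreover have "finite (hash_below L rho k X)" "c \<notin> hash_below L rho k X"
    using assms by (simp_all add: hash_below_def)
  ultimately have "(level_summary L rho k X + (if hash L rho c < 2^k then 1 + counter_mod k * hash L rho c else 0))
      mod level_mod k = level_summary L rho k (insert c X)"
    unfolding level_summary_def
    by (cases "hash L rho c < 2^k") (simp_all only: if_True if_False card_insert_disjoint sum.insert
        mod_add_left_eq, simp_all add: algebra_simps)
  with \<open>k \<in> {..<L}\<close> show "(level_digit (encode L rho X) k
        + (if hash L rho c < 2^k then 1 + counter_mod k * hash L rho c else 0)) mod level_mod k
        * prod level_mod {..<k} = level_summary L rho k (insert c X) * prod level_mod {..<k}"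
    by (simp add: level_digit_encode)
qed

lemma guess_card_in_range:
  assumes "1 \<le> n"
  shows "guess_card n L rho s \<in> {1..n}"
proof -
  define k where "k = (LEAST k. single_unseen n L rho s k)"
  have "y \<in> {1..n}" if "unseen_candidate n L rho s k y" for y
    using that by (simp add: unseen_candidate_def hash_below_def)
  then show ?thesis
    using assms LeastI_ex[of "unseen_candidate n L rho s k"]
    by (simp add: guess_card_def Let_def flip: k_def)
qed

lemma card_hash_below_le:
  assumes "X \<subseteq> {1..2^L}"
  shows "card (hash_below L rho k X) \<le> 2^k"
proof -
  have "inj_on (hash L rho) (hash_below L rho k X)"
    using inj_on_hash by (rule inj_on_subset) (use assms in \<open>auto simp: hash_below_def\<close>)
  moreover have "hash L rho ` hash_below L rho k X \<subseteq> {..<2^k}"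
    by (auto simp: hash_below_def)
  ultimately show ?thesis
    using card_inj_on_le[of "hash L rho" _ "{..<2^k}"] by simp
qed

lemma hash_below_mono: "k \<le> k' \<Longrightarrow> hash_below L rho k X \<subseteq> hash_below L rho k' X"
  unfolding hash_below_def by (auto intro: order_less_le_trans)

lemma counter_test_iff:
  fixes c K C :: nat
  assumes "c \<le> K" "K \<le> C" "2 \<le> C"
  shows "(1 \<le> K \<and> c mod C = K - 1) \<longleftrightarrow> K = Suc c"
proof (cases "c < C")
  case True
  then show ?thesis
    by auto
next
  case False
  with assms have "c = C" "K = C"
    by simp_all
  with assms(3) show ?thesis
    by simp
qed

lemma level_summary_mod_counter:
  "level_summary L rho k X mod counter_mod k = card (hash_below L rho k X) mod counter_mod k"
  by (simp add: level_summary_def level_mod_def mod_mod_cancel)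

lemma level_summary_div_counter:
  assumes "card (hash_below L rho k X) < counter_mod k"
  shows "level_summary L rho k X div counter_mod k = (\<Sum>x\<in>hash_below L rho k X. hash L rho x) mod 2^k"
  using assms by (simp add: level_summary_def level_mod_def mod_mult2_eq)

lemma single_unseen_encode_iff:
  assumes "n \<le> 2^L" "X \<subseteq> {1..n}" "k < L"
  shows "single_unseen n L rho (encode L rho X) k \<longleftrightarrow> card (hash_below L rho k ({1..n} - X)) = 1"
proof -
  let ?S = "hash_below L rho k X" and ?T = "hash_below L rho k {1..n}"
    and ?U = "hash_below L rho k ({1..n} - X)"
  have "?T = ?S \<union> ?U" "?S \<inter> ?U = {}"
    using assms(2) by (auto simp: hash_below_def)
  moreover have "finite ?S" "finite ?U"
    using finite_subset[OF assms(2)] by (simp_all add: hash_below_def)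
  ultimately have card_T: "card ?T = card ?S + card ?U"
    by (simp add: card_Un_disjoint)
  have "card ?T \<le> counter_mod k"
    using card_hash_below_le[of "{1..n}" L rho k] assms(1) counter_mod_ge(2)[of k] by simp
  then have "single_unseen n L rho (encode L rho X) k \<longleftrightarrow> card ?T = Suc (card ?S)"
    unfolding single_unseen_def level_digit_encode[OF assms(3)] level_summary_mod_counter
    using card_T counter_mod_ge(1) by (intro counter_test_iff) simp_all
  with card_T show ?thesis
    by simp
qed

lemma mod_add_left_cancel_nat: "((c::nat) + a) mod m = (c + b) mod m \<longleftrightarrow> a mod m = b mod m"
  by (simp add: mod_eq_iff_dvd_symdiff_nat)

lemma unseen_candidate_encode_iff:
  assumes "n \<le> 2^L" "X \<subseteq> {1..n}" "k < L" and unseen: "hash_below L rho k ({1..n} - X) = {d}"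
  shows "unseen_candidate n L rho (encode L rho X) k y \<longleftrightarrow> y = d"
proof -
  let ?S = "hash_below L rho k X" and ?T = "hash_below L rho k {1..n}"
  have T: "?T = insert d ?S" and "d \<notin> ?S"
    using assms(2) unseen by (auto simp: hash_below_def)
  have "finite ?S"
    using finite_subset[OF assms(2)] by (simp add: hash_below_def)
  have "card ?T \<le> 2^k"
    using assms(1) by (intro card_hash_below_le) auto
  moreover have "card ?T = Suc (card ?S)"
    unfolding T using \<open>finite ?S\<close> \<open>d \<notin> ?S\<close> by simp
  ultimately have "card ?S < counter_mod k"
    using counter_mod_ge(2)[of k] by linarith
  then have digit: "level_digit (encode L rho X) k div counter_mod k = (\<Sum>x\<in>?S. hash L rho x) mod 2^k"
    by (simp add: level_digit_encode[OF assms(3)] level_summary_div_counter)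
  have d_T: "d \<in> ?T" and "hash L rho d < 2^k"
    using T unseen by (auto simp: hash_below_def)
  have "(\<Sum>x\<in>?T. hash L rho x) = (\<Sum>x\<in>?S. hash L rho x) + hash L rho d"
    unfolding T using \<open>finite ?S\<close> \<open>d \<notin> ?S\<close> by simp
  then have "unseen_candidate n L rho (encode L rho X) k y
      \<longleftrightarrow> y \<in> ?T \<and> hash L rho y mod 2^k = hash L rho d mod 2^k"
    unfolding unseen_candidate_def digit mod_add_left_eq by (simp add: mod_add_left_cancel_nat)
  also have "\<dots> \<longleftrightarrow> y \<in> ?T \<and> hash L rho y = hash L rho d"
    using \<open>hash L rho d < 2^k\<close> by (auto simp: hash_below_def)
  also have "\<dots> \<longleftrightarrow> y = d"
    using d_T assms(1) inj_onD[OF inj_on_hash, of L rho y d] by (auto simp: hash_below_def)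
  finally show ?thesis .
qed

lemma guess_card_encode:
  assumes "n \<le> 2^L" "X \<subseteq> {1..n}" and isolated: "\<exists>k<L. hash_below L rho k ({1..n} - X) = {d}"
  shows "guess_card n L rho (encode L rho X) = d"
proof -
  let ?s = "encode L rho X"
  obtain k1 where "k1 < L" and k1: "hash_below L rho k1 ({1..n} - X) = {d}"
    using isolated by blast
  then have "single_unseen n L rho ?s k1"
    using assms(1,2) by (simp add: single_unseen_encode_iff)
  define k where "k = (LEAST k. single_unseen n L rho ?s k)"
  have "k \<le> k1" "single_unseen n L rho ?s k"
    unfolding k_def using \<open>single_unseen n L rho ?s k1\<close> by (auto intro: Least_le LeastI)
  moreover have "k < L"
    using \<open>k \<le> k1\<close> \<open>k1 < L\<close> by simp
  ultimately obtain z where "hash_below L rho k ({1..n} - X) = {z}"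
    using single_unseen_encode_iff[OF assms(1,2)] card_1_singletonE by metis
  moreover have "hash_below L rho k ({1..n} - X) \<subseteq> {d}"
    using hash_below_mono[OF \<open>k \<le> k1\<close>] k1 by blast
  ultimately have "hash_below L rho k ({1..n} - X) = {d}"
    by simp
  then have "unseen_candidate n L rho ?s k = (\<lambda>y. y = d)"
    using unseen_candidate_encode_iff[OF assms(1,2) \<open>k < L\<close>] by blast
  then show ?thesis
    by (simp add: guess_card_def Least_equality flip: k_def)
qed

section \<open>Expected score\<close>

lemma det_score_ge_isolated:
  assumes "n \<le> 2^L"
  shows "distinct cs \<Longrightarrow> X \<inter> set cs = {} \<Longrightarrow> X \<union> set cs \<subseteq> {1..n} \<Longrightarrow>
    (\<Sum>i<length cs. of_bool (\<exists>k<L. hash_below L rho k ({1..n} - (X \<union> set (take i cs))) = {cs ! i}))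
      \<le> det_score (guess_card n L) (update L) rho (encode L rho X) cs"
proof (induction cs arbitrary: X)
  case Nil
  then show ?case by simp
next
  case (Cons c cs)
  then have "c \<notin> X" "finite X"
    using finite_subset[of X "{1..n}"] by auto
  have "(\<Sum>i<length (c # cs).
          of_bool (\<exists>k<L. hash_below L rho k ({1..n} - (X \<union> set (take i (c # cs)))) = {(c # cs) ! i}))
      = of_bool (\<exists>k<L. hash_below L rho k ({1..n} - X) = {c})
        + (\<Sum>i<length cs.
             of_bool (\<exists>k<L. hash_below L rho k ({1..n} - (insert c X \<union> set (take i cs))) = {cs ! i}))"
    by (simp only: length_Cons sum.lessThan_Suc_shift) (simp add: insert_commute)
  also have "\<dots> \<le> of_bool (guess_card n L rho (encode L rho X) = c)
      + det_score (guess_card n L) (update L) rho (encode L rho (insert c X)) cs"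
  proof (rule add_mono)
    show "of_bool (\<exists>k<L. hash_below L rho k ({1..n} - X) = {c})
        \<le> (of_bool (guess_card n L rho (encode L rho X) = c) :: nat)"
      using guess_card_encode[OF assms, of X rho c] Cons.prems by auto
    show "(\<Sum>i<length cs.
             of_bool (\<exists>k<L. hash_below L rho k ({1..n} - (insert c X \<union> set (take i cs))) = {cs ! i}))
        \<le> det_score (guess_card n L) (update L) rho (encode L rho (insert c X)) cs"
      using Cons by (intro Cons.IH) auto
  qed
  also have "\<dots> = det_score (guess_card n L) (update L) rho (encode L rho X) (c # cs)"
    by (simp add: update_encode[OF \<open>finite X\<close> \<open>c \<notin> X\<close>])
  finally show ?case .
qed

lemma harm_reversed: "(\<Sum>i<n. 1 / real (n - i)) = harm n"
proof -
  have "(\<Sum>i<n. 1 / real (n - i)) = (\<Sum>i<n. inverse (real (Suc (n - Suc i))))"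
    by (intro sum.cong refl) (simp add: Suc_diff_Suc field_simps)
  also have "\<dots> = (\<Sum>k<n. inverse (real (Suc k)))"
    by (rule sum.nat_diff_reindex)
  finally show ?thesis
    by (simp add: harm_altdef)
qed

lemma card_seeds_isolating_next:
  assumes "1 \<le> L" "n \<le> 2^L" "distinct deck" "set deck = {1..n}" "i < n"
  shows "real (2^L * 2^L) / (4 * real (n - i))
           \<le> card {rho. rho < 2^L * 2^L \<and>
                      (\<exists>k<L. hash_below L rho k ({1..n} - set (take i deck)) = {deck ! i})}"
proof -
  define R where "R = {1..n} - set (take i deck)"
  have "length deck = n"
    using distinct_card[OF assms(3)] assms(4) by simp
  have "set (take i deck) \<subseteq> {1..n}"
    using set_take_subset[of i deck] assms(4) by simp
  moreover have "card (set (take i deck)) = i"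
    using assms(3,5) \<open>length deck = n\<close> by (simp add: distinct_card)
  ultimately have "card R = n - i"
    by (simp add: R_def card_Diff_subset)
  have "distinct (take i deck @ [deck ! i])"
    using assms(3,5) \<open>length deck = n\<close> by (metis distinct_take take_Suc_conv_app_nth)
  moreover have "deck ! i \<in> {1..n}"
    using nth_mem[of i deck] assms(4,5) \<open>length deck = n\<close> by simp
  ultimately have "deck ! i \<in> R"
    by (simp add: R_def)
  moreover have "R \<subseteq> {1..2^L}"
    using assms(2) by (auto simp: R_def)
  ultimately show ?thesis
    using card_isolating_seeds[OF assms(1), of R "deck ! i"] \<open>card R = n - i\<close>
    by (simp add: R_def)
qed

lemma expected_score_guess_card_ge_harm:
  assumes "1 \<le> L" "n \<le> 2^L" "distinct deck" "set deck = {1..n}"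
  shows "harm n / 4 \<le> expected_score (2 * L) (\<lambda>rho s. return_pmf (guess_card n L rho s))
                                         (\<lambda>rho s c. return_pmf (update L rho s c)) 0 deck"
proof -
  define N where "N = (2::nat)^L * 2^L"
  define P where "P i rho \<longleftrightarrow> (\<exists>k<L. hash_below L rho k ({1..n} - set (take i deck)) = {deck ! i})"
    for i rho
  have "real N * (harm n / 4) = (\<Sum>i<n. real N / (4 * real (n - i)))"
    unfolding harm_reversed[symmetric] sum_divide_distrib sum_distrib_left by (rule sum.cong) simp_all
  also have "\<dots> \<le> (\<Sum>i<n. real (card {rho. rho < N \<and> P i rho}))"
    unfolding N_def P_def using assms by (intro sum_mono card_seeds_isolating_next) simp_all
  also have "\<dots> = (\<Sum>i<n. \<Sum>rho<N. of_bool (P i rho))"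
    by (intro sum.cong refl) (simp add: sum_of_bool_eq lessThan_def Collect_conj_eq)
  also have "\<dots> = (\<Sum>rho<N. \<Sum>i<n. of_bool (P i rho))"
    by (rule sum.swap)
  also have "\<dots> \<le> (\<Sum>rho<N. real (det_score (guess_card n L) (update L) rho 0 deck))"
  proof (rule sum_mono)
    fix rho
    have "length deck = n"
      using distinct_card[OF assms(3)] assms(4) by simp
    then have "(\<Sum>i<n. of_bool (P i rho)) \<le> det_score (guess_card n L) (update L) rho (encode L rho {}) deck"
      using det_score_ge_isolated[OF assms(2,3), of "{}" rho] assms(4) by (simp add: P_def)
    then have "real (\<Sum>i<n. of_bool (P i rho)) \<le> real (det_score (guess_card n L) (update L) rho 0 deck)"
      unfolding encode_empty by (simp only: of_nat_le_iff)
    then show "(\<Sum>i<n. of_bool (P i rho)) \<le> real (det_score (guess_card n L) (update L) rho 0 deck)"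
      by simp
  qed
  finally have "harm n / 4 \<le> (\<Sum>rho<N. real (det_score (guess_card n L) (update L) rho 0 deck)) / N"
    by (simp add: N_def field_simps)
  then show ?thesis
    by (simp add: expected_score_deterministic N_def power_add mult_2)
qed

lemma valid_guesser_guess_card:
  assumes "1 \<le> n"
  shows "valid_guesser n (L^2 - L + 2) (2 * L)
           (\<lambda>rho s. return_pmf (guess_card n L rho s)) (\<lambda>rho s c. return_pmf (update L rho s c)) 0"
  unfolding valid_guesser_def
  using guess_card_in_range[OF assms] less_le_trans[OF update_less prod_level_mod_le] by simp

lemma le_pow2_ceiling_log: "n \<le> 2 ^ nat \<lceil>log 2 (real n)\<rceil>"
proof -
  have "real n \<le> 2 ^ nat \<lceil>log 2 (real n)\<rceil>"
    by (smt (verit) less_log_of_power real_nat_ceiling_ge)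
  then have "real n \<le> real (2 ^ nat \<lceil>log 2 (real n)\<rceil>)"
    by simp
  then show ?thesis
    by (simp only: of_nat_le_iff)
qed

lemma one_le_nat_ceiling_log:
  assumes "2 \<le> n"
  shows "1 \<le> nat \<lceil>log 2 (real n)\<rceil>"
proof -
  have "1 \<le> log 2 (real n)"
    using assms by simp
  then have "nat \<lceil>1::real\<rceil> \<le> nat \<lceil>log 2 (real n)\<rceil>"
    by (intro nat_mono ceiling_mono)
  then show ?thesis
    by simp
qed

lemma ln_le_harm_self: "ln (real n) \<le> harm n"
proof (cases "n = 0")
  case False
  then have "ln (real n) \<le> ln (real n + 1)"
    by simp
  also have "\<dots> \<le> harm n"
    by (rule ln_le_harm)
  finally show ?thesis .
qed (simp add: harm_def)

theorem mainTheorem3: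
  fixes n :: nat
  assumes "n \<ge> 1"
  defines "L \<equiv> nat \<lceil>log 2 (real n)\<rceil>"
  shows "\<exists>guess upd s0.
           valid_guesser n (L ^ 2 - L + 2) (2 * L) guess upd s0 \<and>
           (\<forall>deck. distinct deck \<and> set deck = {1..n} \<longrightarrow>
              expected_score (2 * L) guess upd s0 deck \<ge> ln (real n) / 4)"
proof -
  let ?guess = "\<lambda>rho s. return_pmf (guess_card n L rho s)"
  let ?upd = "\<lambda>rho s c. return_pmf (update L rho s c)"
  have "ln (real n) / 4 \<le> expected_score (2 * L) ?guess ?upd 0 deck"
    if "distinct deck" "set deck = {1..n}" for deck
  proof (cases "n = 1")
    case True
    then show ?thesis
      by (simp add: expected_score_deterministic sum_nonneg)
  next
    case False
    with assms(1) have "1 \<le> L"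
      unfolding L_def by (intro one_le_nat_ceiling_log) simp
    then have "harm n / 4 \<le> expected_score (2 * L) ?guess ?upd 0 deck"
      using le_pow2_ceiling_log[of n, folded L_def] that by (rule expected_score_guess_card_ge_harm)
    with ln_le_harm_self[of n] show ?thesis
      by linarith
  qed
  then show ?thesis
    using valid_guesser_guess_card[OF assms(1)] by blast
qed

end
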